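(* Let $G$ be a topological group, let $\mathcal{Y}$ be a Hausdorff locally convex space, let $n\ge 1$, and let $\phi\in\mathcal{LUC}_{\rm loc}^n(G,\mathcal{Y})$. Then: (1) For all $g\in G$, $X\in\mathfrak{L}(G)$ and $t\in\mathbb{R}$ one can write $$\phi(gX(t))=\sum_{j=0}^n\frac{t^j}{j!}((D^\lambda_X)^j\phi)(g)+t^n\chi_1(g,X,t),$$ where $\chi_1\colon G\times\mathfrak{L}(G)\times\mathbb{R}\to\mathcal{Y}$ is a function with $\lim_{t\to0}\chi_1(g,X,t)=0$. (2) For all $X_1,X_2\in\mathfrak{L}(G)$, $g\in G$, $t\in\mathbb{R}$ one can write $$\phi(gX_1(t)X_2(t))=\phi(g)+t\big((D^\lambda_{X_1}\phi)(g)+(D^\lambda_{X_2}\phi)(g)\big)+t\chi_2(g,X_1,X_2,t),$$ where $\chi_2\colon G\times\mathfrak{L}(G)\times\mathfrak{L}(G)\times\mathbb{R}\to\mathcal{Y}$ is a function with $\lim_{t\to0}\chi_2(g,X_1,X_2,t)=0$. Moreover, for every $g_0\in G$ (and fixed $X$, respectively fixed $X_1,X_2$) there exists a neighborhood $V_0$ of $g_0$ such that both limits $\lim_{t\to0}\chi_1(g,X,t)=0$ and $\lim_{t\to0}\chi_2(g,X_1,X_2,t)=0$ hold uniformly for $g\in V_0$.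
   Context: All topological groups and locally convex spaces are Hausdorff. $\mathfrak{L}(G)$ denotes the set of one-parameter subgroups of $G$, i.e. continuous homomorphisms $X\colon(\mathbb{R},+)\to G$. For $\phi\colon G\to\mathcal{Y}$, $X\in\mathfrak{L}(G)$, $g\in G$, set $(D^\lambda_X\phi)(g)=\lim_{t\to0}\frac{\phi(gX(t))-\phi(g)}{t}$ whenever the limit exists. $\mathcal{LUC}_{\rm loc}(G,\mathcal{Y})$ is the set of all $\phi\colon G\to\mathcal{Y}$ such that every $g_0\in G$ has a neighborhood $V$ on which $\phi$ is left uniformly continuous: for every neighborhood $U$ of $0\in\mathcal{Y}$ there is a neighborhood $W$ of $\mathbf{1}\in G$ such that $x,y\in V$, $x^{-1}y\in W$ imply $\phi(x)-\phi(y)\in U$. $\mathcal{LUC}^1_{\rm loc}(G,\mathcal{Y})$ is the set of $\phi\in\mathcal{LUC}_{\rm loc}(G,\mathcal{Y})$ such that $D^\lambda_X\phi(g)$ exists for all $X\in\mathfrak{L}(G)$, $g\in G$, and $D^\lambda_X\phi\in\mathcal{LUC}_{\rm loc}(G,\mathcal{Y})$ for every $X$; inductively, $\mathcal{LUC}^n_{\rm loc}(G,\mathcal{Y})$ is the set of $\phi\in\mathcal{LUC}^{n-1}_{\rm loc}(G,\mathcal{Y})$ such that all iterated derivatives $D^\lambda_{X_1}(D^\lambda_{X_2}\cdots(D^\lambda_{X_n}\phi)\cdots)$ exist everywhere and belong to $\mathcal{LUC}_{\rm loc}(G,\mathcal{Y})$ for all $X_1,\dots,X_n\in\mathfrak{L}(G)$.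 $(D^\lambda_X)^j$ denotes the $j$-fold iterate, $(D^\lambda_X)^0\phi=\phi$. *)

theory Defs
  imports "HOL-Analysis.Analysis"
begin

text \<open>Topological groups are written additively (the group need not be commutative):
  a Hausdorff topological group is a type of class
  \<open>{topological_group_add, t2_space}\<close>; the product \<open>g X(t)\<close> is \<open>g + X t\<close>
  and \<open>x\<inverse> y\<close> is \<open>- x + y\<close>.\<close>

class locally_convex_space = real_vector + topological_ab_group_add + t2_space +
  assumes scaleR_continuous:
    "\<And>c x U. open U \<Longrightarrow> c *\<^sub>R (x::'a) \<in> U \<Longrightarrow>
       \<exists>A B. open A \<and> c \<in> A \<and> open B \<and> x \<in> B \<and> (\<forall>d\<in>A. \<forall>y\<in>B. d *\<^sub>R y \<in> U)"
  \<comment> \<open>the last conjunct is the unfolded definition of \<open>convex C\<close>\<close>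
  assumes convex_nhds_base:
    "\<And>U. open U \<Longrightarrow> (0::'a) \<in> U \<Longrightarrow> \<exists>C. open C \<and> 0 \<in> C \<and> C \<subseteq> U \<and>
       (\<forall>x\<in>C. \<forall>y\<in>C. \<forall>u\<ge>0. \<forall>v\<ge>0. u + v = 1 \<longrightarrow> u *\<^sub>R x + v *\<^sub>R y \<in> C)"

definition one_param_subgroups :: "(real \<Rightarrow> 'g::topological_group_add) set" where
  "one_param_subgroups = {X. continuous_on UNIV X \<and> (\<forall>s t. X (s + t) = X s + X t)}"

definition has_ldir_deriv ::
    "('g::topological_group_add \<Rightarrow> 'y::locally_convex_space) \<Rightarrow> (real \<Rightarrow> 'g) \<Rightarrow> 'g \<Rightarrow> 'y \<Rightarrow> bool" where
  "has_ldir_deriv \<phi> X g v \<longleftrightarrow>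
     ((\<lambda>t. (1 / t) *\<^sub>R (\<phi> (g + X t) - \<phi> g)) \<longlongrightarrow> v) (at 0)"

definition ldir_deriv ::
    "(real \<Rightarrow> 'g::topological_group_add) \<Rightarrow> ('g \<Rightarrow> 'y::locally_convex_space) \<Rightarrow> 'g \<Rightarrow> 'y" where
  "ldir_deriv X \<phi> g = (THE v. has_ldir_deriv \<phi> X g v)"

fun iter_ldir_deriv ::
    "(real \<Rightarrow> 'g::topological_group_add) list \<Rightarrow> ('g \<Rightarrow> 'y::locally_convex_space) \<Rightarrow> 'g \<Rightarrow> 'y" where
  "iter_ldir_deriv [] \<phi> = \<phi>"
| "iter_ldir_deriv (X # Xs) \<phi> = ldir_deriv X (iter_ldir_deriv Xs \<phi>)"

definition ldir_deriv_pow ::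
    "(real \<Rightarrow> 'g::topological_group_add) \<Rightarrow> nat \<Rightarrow> ('g \<Rightarrow> 'y::locally_convex_space) \<Rightarrow> 'g \<Rightarrow> 'y" where
  "ldir_deriv_pow X j \<phi> = iter_ldir_deriv (replicate j X) \<phi>"

definition LUC_loc :: "('g::topological_group_add \<Rightarrow> 'y::locally_convex_space) set" where
  "LUC_loc = {\<phi>. \<forall>g0. \<exists>V. open V \<and> g0 \<in> V \<and>
      (\<forall>U. open U \<and> 0 \<in> U \<longrightarrow>
        (\<exists>W. open W \<and> 0 \<in> W \<and>
           (\<forall>x\<in>V. \<forall>y\<in>V. - x + y \<in> W \<longrightarrow> \<phi> x - \<phi> y \<in> U)))}"

fun LUCn_loc :: "nat \<Rightarrow> ('g::topological_group_add \<Rightarrow> 'y::locally_convex_space) set" where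
  "LUCn_loc 0 = LUC_loc"
| "LUCn_loc (Suc n) = {\<phi>. \<phi> \<in> LUCn_loc n \<and>
      (\<forall>X Xs. X \<in> one_param_subgroups \<and> set Xs \<subseteq> one_param_subgroups \<and> length Xs = n \<longrightarrow>
         (\<forall>g. \<exists>v. has_ldir_deriv (iter_ldir_deriv Xs \<phi>) X g v) \<and>
         iter_ldir_deriv (X # Xs) \<phi> \<in> LUC_loc)}"

definition uniform_tendsto_zero_on ::
    "'g set \<Rightarrow> ('g \<Rightarrow> real \<Rightarrow> 'y::locally_convex_space) \<Rightarrow> bool" where
  "uniform_tendsto_zero_on V f \<longleftrightarrow>
     (\<forall>U. open U \<and> 0 \<in> U \<longrightarrow>
        (\<exists>\<delta>>0. \<forall>g\<in>V. \<forall>t. t \<noteq> 0 \<and> \<bar>t\<bar> < \<delta> \<longrightarrow> f g t \<in> U))"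

end

theory Submission
  imports Defs
begin

text \<open>Along a one-parameter subgroup \<open>X\<close>, \<open>s \<mapsto> \<phi> (g + X s)\<close> is a curve in the locally convex space whose
  \<open>j\<close>-th derivative is \<open>(D\<^sub>X\<^sup>j \<phi>) (g + X s)\<close>. Convex neighbourhoods of \<open>0\<close> take the place of
  norms: a mean value inequality shows that difference quotients stay in every open convex set
  containing the derivatives, and Taylor's formula with remainder follows by induction on the
  order, the remainder of order \<open>n\<close> being controlled by the increment of \<open>D\<^sub>X\<^sup>n \<phi>\<close> along \<open>X\<close>.
  Local left uniform continuity of \<open>D\<^sub>X\<^sup>n \<phi>\<close> makes this control uniform near every point, and
  the two-step expansion follows from two first-order expansions, one of them taken at the
  moving point \<open>g + X\<^sub>1 t\<close>.\<close>

lemma open_scaleR_vimage: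
  fixes U :: "'y::locally_convex_space set"
  assumes "open U"
  shows "open {x. c *\<^sub>R x \<in> U}"
proof (subst open_subopen, intro ballI)
  fix x assume "x \<in> {x. c *\<^sub>R x \<in> U}"
  then obtain A B where "open B" "x \<in> B" "\<forall>d\<in>A. \<forall>y\<in>B. d *\<^sub>R y \<in> U" "c \<in> A"
    using scaleR_continuous[OF assms] by (metis mem_Collect_eq)
  then show "\<exists>T. open T \<and> x \<in> T \<and> T \<subseteq> {x. c *\<^sub>R x \<in> U}" by blast
qed

lemma convex_scaleR_vimage: "convex D \<Longrightarrow> convex {x. c *\<^sub>R x \<in> D}"
  using convex_linear_vimage[of "\<lambda>x. c *\<^sub>R x" D] by (simp add: linear_scale_self vimage_def)

lemma tendsto_scaleR_left_lcs:
  fixes c :: "'y::locally_convex_space"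
  assumes "(a \<longlongrightarrow> \<alpha>) F"
  shows "((\<lambda>x. a x *\<^sub>R c) \<longlongrightarrow> \<alpha> *\<^sub>R c) F"
  unfolding tendsto_def
proof (intro allI impI)
  fix U assume "open U" "\<alpha> *\<^sub>R c \<in> U"
  then obtain A B where "open A" "\<alpha> \<in> A" "c \<in> B" and AB: "\<forall>d\<in>A. \<forall>y\<in>B. d *\<^sub>R y \<in> U"
    by (metis scaleR_continuous)
  have "eventually (\<lambda>x. a x \<in> A) F"
    using assms \<open>open A\<close> \<open>\<alpha> \<in> A\<close> by (rule topological_tendstoD)
  then show "eventually (\<lambda>x. a x *\<^sub>R c \<in> U) F"
    by eventually_elim (use AB \<open>c \<in> B\<close> in blast)
qed

lemma open_convex_nhds_zero_subset:
  fixes U :: "'y::locally_convex_space set"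
  assumes "open U" "0 \<in> U"
  obtains D where "open D" "convex D" "0 \<in> D" "D \<subseteq> U"
  using convex_nhds_base[OF assms] unfolding convex_def by blast

lemma convex_scaleR_zero_mem:
  fixes D :: "'a::real_vector set"
  assumes "convex D" "0 \<in> D" "x \<in> D" "0 \<le> c" "c \<le> 1"
  shows "c *\<^sub>R x \<in> D"
  using convexD[OF assms(1,3,2), of c "1 - c"] assms(4,5) by simp

lemma convex_quotient_add:
  fixes x y :: "'a::real_vector"
  assumes "convex K" "a > 0" "b > 0" "(1/a) *\<^sub>R x \<in> K" "(1/b) *\<^sub>R y \<in> K"
  shows "(1/(a+b)) *\<^sub>R (x + y) \<in> K"
proof -
  have "(a/(a+b)) *\<^sub>R ((1/a) *\<^sub>R x) + (b/(a+b)) *\<^sub>R ((1/b) *\<^sub>R y) \<in> K"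
    using assms by (intro convexD) (auto simp: add_divide_distrib[symmetric])
  then show ?thesis
    using assms(2,3) by (simp add: scaleR_add_right)
qed

lemma scaleR_quotient_swap:
  fixes x y :: "'a::real_vector"
  shows "(1/(b - a)) *\<^sub>R (y - x) = (1/(a - b)) *\<^sub>R (x - y)"
proof -
  have "1/(a - b) = - (1/(b - a))"
    by (simp add: divide_minus_right[symmetric])
  then show ?thesis
    by (simp add: scaleR_minus_right[symmetric] del: scaleR_minus_right)
qed

definition has_curve_deriv :: "(real \<Rightarrow> 'y::locally_convex_space) \<Rightarrow> 'y \<Rightarrow> real \<Rightarrow> bool" where
  "has_curve_deriv f v s \<longleftrightarrow> ((\<lambda>h. (1/h) *\<^sub>R (f (s + h) - f s)) \<longlongrightarrow> v) (at 0)"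

lemma has_curve_deriv_diff:
  "has_curve_deriv f v s \<Longrightarrow> has_curve_deriv g w s \<Longrightarrow> has_curve_deriv (\<lambda>x. f x - g x) (v - w) s"
  unfolding has_curve_deriv_def by (drule (1) tendsto_diff) (simp add: algebra_simps)

lemma has_curve_deriv_sum:
  assumes "\<And>i. i \<in> I \<Longrightarrow> has_curve_deriv (f i) (v i) s"
  shows "has_curve_deriv (\<lambda>x. \<Sum>i\<in>I. f i x) (\<Sum>i\<in>I. v i) s"
proof -
  have "((\<lambda>h. \<Sum>i\<in>I. (1/h) *\<^sub>R (f i (s + h) - f i s)) \<longlongrightarrow> (\<Sum>i\<in>I. v i)) (at 0)"
    using assms unfolding has_curve_deriv_def by (rule tendsto_sum)
  then show ?thesis
    unfolding has_curve_deriv_def by (simp add: sum_subtractf[symmetric] scaleR_sum_right)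
qed

lemma has_curve_deriv_scaleR_const:
  fixes c :: "'y::locally_convex_space"
  assumes "(p has_real_derivative p') (at s)"
  shows "has_curve_deriv (\<lambda>x. p x *\<^sub>R c) (p' *\<^sub>R c) s"
proof -
  have "((\<lambda>h. (p (s + h) - p s) / h) \<longlongrightarrow> p') (at 0)"
    using assms by (simp add: DERIV_def)
  from tendsto_scaleR_left_lcs[OF this, of c] show ?thesis
    unfolding has_curve_deriv_def by (simp add: scaleR_diff_left[symmetric])
qed

lemma has_curve_deriv_eventually_in:
  assumes "has_curve_deriv f v s" "open K" "v \<in> K"
  obtains d where "d > 0" "\<And>h. h \<noteq> 0 \<Longrightarrow> \<bar>h\<bar> < d \<Longrightarrow> (1/h) *\<^sub>R (f (s + h) - f s) \<in> K"
proof -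
  have "eventually (\<lambda>h. (1/h) *\<^sub>R (f (s + h) - f s) \<in> K) (at 0)"
    using assms unfolding has_curve_deriv_def by (rule topological_tendstoD)
  then show ?thesis
    using that unfolding eventually_at by (auto simp: dist_real_def)
qed

text \<open>The local-to-global step is the bisection principle \<open>Bolzano\<close>.\<close>
lemma difference_quotient_in_convex:
  fixes f :: "real \<Rightarrow> 'y::locally_convex_space"
  assumes "a < b" "convex K" "open K"
    and deriv: "\<And>s. a \<le> s \<Longrightarrow> s \<le> b \<Longrightarrow> \<exists>v\<in>K. has_curve_deriv f v s"
  shows "(1/(b - a)) *\<^sub>R (f b - f a) \<in> K"
proof -
  define P where "P x y \<longleftrightarrow> x < y \<longrightarrow> (1/(y - x)) *\<^sub>R (f y - f x) \<in> K" for x y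
  have trans: "P x z" if "P x y" "P y z" "x \<le> y" "y \<le> z" for x y z
  proof (cases "x = y \<or> y = z")
    case False
    then have "(1/((y - x) + (z - y))) *\<^sub>R ((f y - f x) + (f z - f y)) \<in> K"
      using that \<open>convex K\<close> by (intro convex_quotient_add) (auto simp: P_def)
    then show ?thesis by (simp add: P_def)
  qed (use that in auto)
  have local: "\<exists>d>0. \<forall>x y. x \<le> s \<and> s \<le> y \<and> y - x < d \<longrightarrow> P x y"
    if s: "a \<le> s" "s \<le> b" for s
  proof -
    obtain v where v: "has_curve_deriv f v s" "v \<in> K"
      using deriv s by blast
    obtain d where "d > 0" and d: "\<And>h. h \<noteq> 0 \<Longrightarrow> \<bar>h\<bar> < d \<Longrightarrow> (1/h) *\<^sub>R (f (s + h) - f s) \<in> K"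
      using has_curve_deriv_eventually_in[OF v(1) \<open>open K\<close> v(2)] by blast
    have "P x y" if "x \<le> s" "s \<le> y" "y - x < d" for x y
    proof (rule trans)
      show "P x s"
        using d[of "x - s"] \<open>y - x < d\<close> \<open>s \<le> y\<close> by (simp add: P_def scaleR_quotient_swap[of s x])
      show "P s y"
        using d[of "y - s"] \<open>y - x < d\<close> \<open>x \<le> s\<close> by (simp add: P_def)
    qed fact+
    then show ?thesis using \<open>d > 0\<close> by blast
  qed
  have "P a b"
    by (rule Bolzano[of a b P, OF _ trans local]) (use \<open>a < b\<close> in auto)
  then show ?thesis using \<open>a < b\<close> by (simp add: P_def)
qed

lemma difference_quotient_in_convex_segment:
  fixes f :: "real \<Rightarrow> 'y::locally_convex_space"
  assumes "t \<noteq> 0" "convex K" "open K"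
    and deriv: "\<And>s. s \<in> closed_segment 0 t \<Longrightarrow> \<exists>v\<in>K. has_curve_deriv f v s"
  shows "(1/t) *\<^sub>R (f t - f 0) \<in> K"
proof (cases "t > 0")
  case True
  then show ?thesis
    using difference_quotient_in_convex[of 0 t K f] assms by (simp add: closed_segment_eq_real_ivl)
next
  case False
  then have "(1/(0 - t)) *\<^sub>R (f 0 - f t) \<in> K"
    using difference_quotient_in_convex[of t 0 K f] assms by (simp add: closed_segment_eq_real_ivl)
  then show ?thesis
    using scaleR_minus_right[of "1/t" "f 0 - f t"] by simp
qed

definition taylor_poly :: "(nat \<Rightarrow> 'a::real_vector) \<Rightarrow> nat \<Rightarrow> real \<Rightarrow> 'a" where
  "taylor_poly c n t = (\<Sum>j\<le>n. (t ^ j / fact j) *\<^sub>R c j)"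

lemma taylor_poly_0 [simp]: "taylor_poly c 0 t = c 0"
  by (simp add: taylor_poly_def)

lemma taylor_poly_at_0 [simp]: "taylor_poly c n 0 = c 0"
  by (induction n) (simp_all add: taylor_poly_def)

lemma has_curve_deriv_taylor_poly:
  fixes c :: "nat \<Rightarrow> 'y::locally_convex_space"
  shows "has_curve_deriv (taylor_poly c (Suc n)) (taylor_poly (\<lambda>j. c (Suc j)) n s) s"
proof -
  have "has_curve_deriv (taylor_poly c (Suc n)) (\<Sum>j\<le>Suc n. (real j * s ^ (j - 1) / fact j) *\<^sub>R c j) s"
    unfolding taylor_poly_def
    by (intro has_curve_deriv_sum has_curve_deriv_scaleR_const) (auto intro!: derivative_eq_intros)
  also have "(\<Sum>j\<le>Suc n. (real j * s ^ (j - 1) / fact j) *\<^sub>R c j) = taylor_poly (\<lambda>j. c (Suc j)) n s"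
    unfolding taylor_poly_def by (subst sum.atMost_Suc_shift) (simp add: fact_Suc)
  finally show ?thesis .
qed

text \<open>Rescaling by \<open>(s/t)^n \<in> [0, 1]\<close> turns the bound on
  \<open>q s / s^n\<close> into one on \<open>q s / t^n\<close>, which the mean value inequality integrates.\<close>
lemma power_quotient_in_convex_Suc:
  fixes r q :: "real \<Rightarrow> 'y::locally_convex_space"
  assumes D: "open D" "convex D" "0 \<in> D" and "t \<noteq> 0" "r 0 = 0" "q 0 = 0"
    and deriv: "\<And>s. s \<in> closed_segment 0 t \<Longrightarrow> has_curve_deriv r (q s) s"
    and bound: "\<And>s. s \<in> closed_segment 0 t \<Longrightarrow> s \<noteq> 0 \<Longrightarrow> (1/s^n) *\<^sub>R q s \<in> D"
  shows "(1/t^Suc n) *\<^sub>R r t \<in> D"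
proof -
  let ?K = "{x. (1/t^n) *\<^sub>R x \<in> D}"
  have "q s \<in> ?K" if s: "s \<in> closed_segment 0 t" for s
  proof (cases "s = 0")
    case False
    obtain u where u: "0 \<le> u" "u \<le> 1" "s = u * t"
      using s by (auto simp: closed_segment_def)
    have "u ^ n *\<^sub>R ((1/s^n) *\<^sub>R q s) \<in> D"
      by (rule convex_scaleR_zero_mem[OF D(2,3) bound[OF s False]]) (use u in \<open>auto intro: power_le_one\<close>)
    also have "u ^ n *\<^sub>R ((1/s^n) *\<^sub>R q s) = (1/t^n) *\<^sub>R q s"
      using False u(3) by (simp add: power_mult_distrib)
    finally show ?thesis by simp
  qed (use \<open>q 0 = 0\<close> D in simp)
  then have "(1/t) *\<^sub>R (r t - r 0) \<in> ?K"
    using deriv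
    by (intro difference_quotient_in_convex_segment[OF \<open>t \<noteq> 0\<close> convex_scaleR_vimage[OF D(2)]
        open_scaleR_vimage[OF D(1)]]) blast
  then show ?thesis
    using \<open>r 0 = 0\<close> by (simp add: mult.commute)
qed

lemma taylor_remainder_in_convex:
  fixes F :: "nat \<Rightarrow> real \<Rightarrow> 'y::locally_convex_space"
  assumes deriv: "\<And>j s. j < n \<Longrightarrow> \<bar>s\<bar> < \<delta> \<Longrightarrow> has_curve_deriv (F j) (F (Suc j) s) s"
    and top: "\<And>s. \<bar>s\<bar> < \<delta> \<Longrightarrow> F n s - F n 0 \<in> D"
    and D: "open D" "convex D" "0 \<in> D"
    and t: "t \<noteq> 0" "\<bar>t\<bar> < \<delta>"
  shows "(1/t^n) *\<^sub>R (F 0 t - taylor_poly (\<lambda>j. F j 0) n t) \<in> D"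
  using deriv top t
proof (induction n arbitrary: F t)
  case 0
  then show ?case by simp
next
  case (Suc n)
  have segment: "\<bar>s\<bar> < \<delta>" if "s \<in> closed_segment 0 t" for s
    using that Suc.prems(3,4) by (auto simp: closed_segment_eq_real_ivl split: if_splits)
  show ?case
  proof (rule power_quotient_in_convex_Suc[OF D \<open>t \<noteq> 0\<close>])
    fix s assume s: "s \<in> closed_segment 0 t"
    show "has_curve_deriv (\<lambda>s. F 0 s - taylor_poly (\<lambda>j. F j 0) (Suc n) s)
        (F 1 s - taylor_poly (\<lambda>j. F (Suc j) 0) n s) s"
      using Suc.prems(1) segment[OF s] by (intro has_curve_deriv_diff has_curve_deriv_taylor_poly) simp
    show "(1/s^n) *\<^sub>R (F 1 s - taylor_poly (\<lambda>j. F (Suc j) 0) n s) \<in> D" if "s \<noteq> 0"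
      using Suc.IH[of "\<lambda>j. F (Suc j)" s] Suc.prems(1,2) segment[OF s] that by simp
  qed simp_all
qed

lemma uniform_tendsto_zero_on_subset:
  "uniform_tendsto_zero_on V f \<Longrightarrow> V' \<subseteq> V \<Longrightarrow> uniform_tendsto_zero_on V' f"
  unfolding uniform_tendsto_zero_on_def by (meson subsetD)

lemma uniform_tendsto_zero_on_cong:
  "(\<And>g t. g \<in> V \<Longrightarrow> t \<noteq> 0 \<Longrightarrow> f g t = f' g t) \<Longrightarrow>
    uniform_tendsto_zero_on V f \<longleftrightarrow> uniform_tendsto_zero_on V f'"
  unfolding uniform_tendsto_zero_on_def by simp

lemma uniform_tendsto_zero_on_imp_tendsto:
  fixes f :: "'g \<Rightarrow> real \<Rightarrow> 'y::locally_convex_space"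
  assumes "uniform_tendsto_zero_on V f" "g \<in> V"
  shows "(f g \<longlongrightarrow> 0) (at 0)"
proof (rule topological_tendstoI)
  fix U :: "'y set" assume "open U" "0 \<in> U"
  then obtain \<delta> where "\<delta> > 0" "\<forall>g\<in>V. \<forall>t. t \<noteq> 0 \<and> \<bar>t\<bar> < \<delta> \<longrightarrow> f g t \<in> U"
    using assms(1) unfolding uniform_tendsto_zero_on_def by blast
  then show "eventually (\<lambda>t. f g t \<in> U) (at 0)"
    unfolding eventually_at using assms(2) by (auto simp: dist_real_def)
qed

lemma uniform_tendsto_zero_on_add:
  fixes f h :: "'g \<Rightarrow> real \<Rightarrow> 'y::locally_convex_space"
  assumes f: "uniform_tendsto_zero_on V f" and h: "uniform_tendsto_zero_on V h"
  shows "uniform_tendsto_zero_on V (\<lambda>g t. f g t + h g t)"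
  unfolding uniform_tendsto_zero_on_def
proof (intro allI impI)
  fix U :: "'y set" assume "open U \<and> 0 \<in> U"
  then have "open {x. 2 *\<^sub>R x \<in> U}" "0 \<in> {x. 2 *\<^sub>R x \<in> U}"
    by (auto intro: open_scaleR_vimage)
  then obtain D where D: "open D" "convex D" "0 \<in> D" "D \<subseteq> {x. 2 *\<^sub>R x \<in> U}"
    by (rule open_convex_nhds_zero_subset)
  obtain \<delta>1 \<delta>2 where "\<delta>1 > 0" "\<forall>g\<in>V. \<forall>t. t \<noteq> 0 \<and> \<bar>t\<bar> < \<delta>1 \<longrightarrow> f g t \<in> D"
    and "\<delta>2 > 0" "\<forall>g\<in>V. \<forall>t. t \<noteq> 0 \<and> \<bar>t\<bar> < \<delta>2 \<longrightarrow> h g t \<in> D"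
    using f h D(1,3) unfolding uniform_tendsto_zero_on_def by meson
  moreover have "a + b \<in> U" if "a \<in> D" "b \<in> D" for a b
  proof -
    have "(1/2) *\<^sub>R a + (1/2) *\<^sub>R b \<in> D"
      using that by (intro convexD[OF D(2)]) auto
    then show ?thesis
      using D(4) by (auto simp: scaleR_add_right)
  qed
  ultimately show "\<exists>\<delta>>0. \<forall>g\<in>V. \<forall>t. t \<noteq> 0 \<and> \<bar>t\<bar> < \<delta> \<longrightarrow> f g t + h g t \<in> U"
    by (intro exI[of _ "min \<delta>1 \<delta>2"]) auto
qed

lemma uniform_tendsto_zero_on_compose:
  fixes f :: "'g \<Rightarrow> real \<Rightarrow> 'y::locally_convex_space"
  assumes "uniform_tendsto_zero_on B f" "\<delta> > 0"
    and "\<And>g t. g \<in> A \<Longrightarrow> \<bar>t\<bar> < \<delta> \<Longrightarrow> k g t \<in> B"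
  shows "uniform_tendsto_zero_on A (\<lambda>g t. f (k g t) t)"
  unfolding uniform_tendsto_zero_on_def
proof (intro allI impI)
  fix U :: "'y set" assume "open U \<and> 0 \<in> U"
  then obtain \<delta>' where "\<delta>' > 0" "\<forall>g\<in>B. \<forall>t. t \<noteq> 0 \<and> \<bar>t\<bar> < \<delta>' \<longrightarrow> f g t \<in> U"
    using assms(1) unfolding uniform_tendsto_zero_on_def by blast
  then show "\<exists>\<delta>>0. \<forall>g\<in>A. \<forall>t. t \<noteq> 0 \<and> \<bar>t\<bar> < \<delta> \<longrightarrow> f (k g t) t \<in> U"
    using assms(2,3) by (intro exI[of _ "min \<delta> \<delta>'"]) auto
qed

lemma one_param_subgroup_add: "X \<in> one_param_subgroups \<Longrightarrow> X (s + t) = X s + X t"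
  unfolding one_param_subgroups_def by blast

lemma one_param_subgroup_zero: "X \<in> one_param_subgroups \<Longrightarrow> X 0 = 0"
  using one_param_subgroup_add[of X 0 0] by (metis add_0_right add_left_imp_eq)

lemma one_param_subgroup_translate_nhds:
  fixes X :: "real \<Rightarrow> 'g::topological_group_add"
  assumes X: "X \<in> one_param_subgroups" and V: "open V" "g0 \<in> V"
  obtains A \<delta> where "open A" "g0 \<in> A" "A \<subseteq> V" "\<delta> > 0"
    "\<And>g s. g \<in> A \<Longrightarrow> \<bar>s\<bar> < \<delta> \<Longrightarrow> g + X s \<in> V"
proof -
  have "continuous_on UNIV X"
    using X unfolding one_param_subgroups_def by blast
  then have "continuous_on UNIV (\<lambda>p::'g \<times> real. fst p + X (snd p))"
    by (intro continuous_intros continuous_on_compose2[OF \<open>continuous_on UNIV X\<close>]) auto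
  then have "open ((\<lambda>p. fst p + X (snd p)) -` V)"
    using V(1) by (rule open_vimage[rotated])
  moreover have "(g0, 0) \<in> (\<lambda>p. fst p + X (snd p)) -` V"
    using V(2) one_param_subgroup_zero[OF X] by simp
  ultimately obtain A B where AB: "open A" "open B" "(g0, 0) \<in> A \<times> B"
      "A \<times> B \<subseteq> (\<lambda>p. fst p + X (snd p)) -` V"
    by (rule open_prod_elim)
  have "0 \<in> B"
    using AB(3) by simp
  then obtain \<delta> where "\<delta> > 0" "ball 0 \<delta> \<subseteq> B"
    using AB(2) unfolding open_contains_ball by blast
  have shift: "g + X s \<in> V" if "g \<in> A" "\<bar>s\<bar> < \<delta>" for g s
  proof -
    have "(g, s) \<in> A \<times> B"
      using that \<open>ball 0 \<delta> \<subseteq> B\<close> by (auto simp: dist_real_def)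
    then show ?thesis
      using AB(4) by (simp add: subset_iff)
  qed
  show ?thesis
    by (rule that[of "A \<inter> V" \<delta>]) (use AB V \<open>\<delta> > 0\<close> shift in auto)
qed

lemma one_param_subgroup_small:
  fixes X :: "real \<Rightarrow> 'g::topological_group_add"
  assumes "X \<in> one_param_subgroups" "open W" "0 \<in> W"
  obtains \<delta> where "\<delta> > 0" "\<And>s. \<bar>s\<bar> < \<delta> \<Longrightarrow> X s \<in> W"
  using one_param_subgroup_translate_nhds[OF assms] by (metis add_0)

lemma has_curve_deriv_one_param_subgroup:
  assumes "X \<in> one_param_subgroups" "has_ldir_deriv \<psi> X (g + X s) v"
  shows "has_curve_deriv (\<lambda>s. \<psi> (g + X s)) v s"
proof -
  have "g + X (s + h) = (g + X s) + X h" for h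
    using one_param_subgroup_add[OF assms(1)] by (simp add: add.assoc)
  then show ?thesis
    using assms(2) unfolding has_ldir_deriv_def has_curve_deriv_def by simp
qed

lemma LUC_loc_increment_uniform:
  fixes \<psi> :: "'g::topological_group_add \<Rightarrow> 'y::locally_convex_space"
  assumes "\<psi> \<in> LUC_loc" and X: "X \<in> one_param_subgroups"
  obtains V where "open V" "g0 \<in> V" "uniform_tendsto_zero_on V (\<lambda>g t. \<psi> (g + X t) - \<psi> g)"
proof -
  obtain V where V: "open V" "g0 \<in> V" and luc: "\<forall>U. open U \<and> 0 \<in> U \<longrightarrow>
      (\<exists>W. open W \<and> 0 \<in> W \<and> (\<forall>x\<in>V. \<forall>y\<in>V. - x + y \<in> W \<longrightarrow> \<psi> x - \<psi> y \<in> U))"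
    using assms(1) unfolding LUC_loc_def by blast
  obtain A \<delta> where A: "open A" "g0 \<in> A" "A \<subseteq> V" "\<delta> > 0"
    and shift: "\<And>g s. g \<in> A \<Longrightarrow> \<bar>s\<bar> < \<delta> \<Longrightarrow> g + X s \<in> V"
    using one_param_subgroup_translate_nhds[OF X V] by blast
  have "uniform_tendsto_zero_on A (\<lambda>g t. \<psi> (g + X t) - \<psi> g)"
    unfolding uniform_tendsto_zero_on_def
  proof (intro allI impI)
    fix U :: "'y set" assume "open U \<and> 0 \<in> U"
    then have "open {x. (-1) *\<^sub>R x \<in> U} \<and> 0 \<in> {x. (-1) *\<^sub>R x \<in> U}"
      using open_scaleR_vimage[of U "-1"] by simp
    then obtain W where W: "open W" "0 \<in> W"
      and W_luc: "\<forall>x\<in>V. \<forall>y\<in>V. - x + y \<in> W \<longrightarrow> \<psi> x - \<psi> y \<in> {x. (-1) *\<^sub>R x \<in> U}"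
      using luc by blast
    obtain \<delta>W where "\<delta>W > 0" and small: "\<And>s. \<bar>s\<bar> < \<delta>W \<Longrightarrow> X s \<in> W"
      using one_param_subgroup_small[OF X W] by blast
    have "\<psi> (g + X t) - \<psi> g \<in> U" if "g \<in> A" "\<bar>t\<bar> < min \<delta> \<delta>W" for g t
    proof -
      have "- g + (g + X t) \<in> W"
        using small that by (simp add: add.assoc[symmetric])
      then have "\<psi> g - \<psi> (g + X t) \<in> {x. (-1) *\<^sub>R x \<in> U}"
        using W_luc shift that A(3) by auto
      then show ?thesis
        by simp
    qed
    then show "\<exists>\<delta>>0. \<forall>g\<in>A. \<forall>t. t \<noteq> 0 \<and> \<bar>t\<bar> < \<delta> \<longrightarrow> \<psi> (g + X t) - \<psi> g \<in> U"
      using \<open>\<delta> > 0\<close> \<open>\<delta>W > 0\<close> by (intro exI[of _ "min \<delta> \<delta>W"]) auto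
  qed
  then show ?thesis
    using that A by blast
qed

lemma LUCn_loc_antimono: "m \<le> n \<Longrightarrow> \<phi> \<in> LUCn_loc n \<Longrightarrow> \<phi> \<in> LUCn_loc m"
proof (induction n)
  case (Suc n)
  then show ?case
    by (cases "m = Suc n") auto
qed simp

lemma ldir_deriv_eqI: "has_ldir_deriv \<psi> X g v \<Longrightarrow> ldir_deriv X \<psi> g = v"
  unfolding ldir_deriv_def has_ldir_deriv_def
  by (rule the_equality) (auto intro: tendsto_unique[OF at_neq_bot])

lemma ldir_deriv_pow_0 [simp]: "ldir_deriv_pow X 0 \<phi> = \<phi>"
  by (simp add: ldir_deriv_pow_def)

lemma ldir_deriv_pow_1 [simp]: "ldir_deriv_pow X (Suc 0) \<phi> = ldir_deriv X \<phi>"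
  by (simp add: ldir_deriv_pow_def)

lemma ldir_deriv_pow_Suc: "ldir_deriv_pow X (Suc j) \<phi> = ldir_deriv X (ldir_deriv_pow X j \<phi>)"
  by (simp add: ldir_deriv_pow_def)

lemma LUCn_loc_SucD:
  assumes "\<phi> \<in> LUCn_loc (Suc j)" "X \<in> one_param_subgroups"
  shows "\<exists>v. has_ldir_deriv (ldir_deriv_pow X j \<phi>) X g v" "ldir_deriv_pow X (Suc j) \<phi> \<in> LUC_loc"
proof -
  have "set (replicate j X) \<subseteq> one_param_subgroups"
    using assms(2) by auto
  then show "\<exists>v. has_ldir_deriv (ldir_deriv_pow X j \<phi>) X g v" "ldir_deriv_pow X (Suc j) \<phi> \<in> LUC_loc"
    using assms unfolding ldir_deriv_pow_def by auto
qed

lemma LUCn_loc_has_ldir_deriv_pow: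
  assumes "\<phi> \<in> LUCn_loc n" "j < n" "X \<in> one_param_subgroups"
  shows "has_ldir_deriv (ldir_deriv_pow X j \<phi>) X g (ldir_deriv_pow X (Suc j) \<phi> g)"
proof -
  have "\<phi> \<in> LUCn_loc (Suc j)"
    using LUCn_loc_antimono[of "Suc j" n] assms(1,2) by simp
  then obtain v where v: "has_ldir_deriv (ldir_deriv_pow X j \<phi>) X g v"
    using LUCn_loc_SucD(1)[OF _ assms(3)] by blast
  then show ?thesis
    by (simp add: ldir_deriv_pow_Suc ldir_deriv_eqI)
qed

lemma LUCn_loc_ldir_deriv_pow_LUC_loc:
  assumes "\<phi> \<in> LUCn_loc n" "j \<le> n" "X \<in> one_param_subgroups"
  shows "ldir_deriv_pow X j \<phi> \<in> LUC_loc"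
proof (cases j)
  case 0
  then show ?thesis
    using LUCn_loc_antimono[of 0 n] assms(1) by simp
next
  case (Suc k)
  then have "\<phi> \<in> LUCn_loc (Suc k)"
    using LUCn_loc_antimono[of "Suc k" n] assms(1,2) by simp
  then show ?thesis
    using LUCn_loc_SucD(2)[OF _ assms(3)] Suc by simp
qed

lemma taylor_remainder_uniform:
  fixes \<phi> :: "'g::topological_group_add \<Rightarrow> 'y::locally_convex_space"
  assumes \<phi>: "\<phi> \<in> LUCn_loc n" and X: "X \<in> one_param_subgroups"
  obtains V where "open V" "g0 \<in> V" "uniform_tendsto_zero_on V
    (\<lambda>g t. (1/t^n) *\<^sub>R (\<phi> (g + X t) - taylor_poly (\<lambda>j. ldir_deriv_pow X j \<phi> g) n t))"
proof -
  obtain V where V: "open V" "g0 \<in> V"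
    and increment: "uniform_tendsto_zero_on V (\<lambda>g t. ldir_deriv_pow X n \<phi> (g + X t) - ldir_deriv_pow X n \<phi> g)"
    using LUC_loc_increment_uniform[OF LUCn_loc_ldir_deriv_pow_LUC_loc[OF \<phi> order.refl X] X, of g0]
    by blast
  have "uniform_tendsto_zero_on V
    (\<lambda>g t. (1/t^n) *\<^sub>R (\<phi> (g + X t) - taylor_poly (\<lambda>j. ldir_deriv_pow X j \<phi> g) n t))"
    unfolding uniform_tendsto_zero_on_def
  proof (intro allI impI)
    fix U :: "'y set" assume "open U \<and> 0 \<in> U"
    then obtain D where D: "open D" "convex D" "0 \<in> D" "D \<subseteq> U"
      using open_convex_nhds_zero_subset[of U] by blast
    obtain \<delta> where "\<delta> > 0" and \<delta>: "\<forall>g\<in>V. \<forall>s. s \<noteq> 0 \<and> \<bar>s\<bar> < \<delta> \<longrightarrow>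
        ldir_deriv_pow X n \<phi> (g + X s) - ldir_deriv_pow X n \<phi> g \<in> D"
      using increment[unfolded uniform_tendsto_zero_on_def, rule_format, of D] D(1,3) by blast
    have "(1/t^n) *\<^sub>R (\<phi> (g + X t) - taylor_poly (\<lambda>j. ldir_deriv_pow X j \<phi> g) n t) \<in> D"
      if g: "g \<in> V" and t: "t \<noteq> 0" "\<bar>t\<bar> < \<delta>" for g t
    proof -
      define F where "F j s = ldir_deriv_pow X j \<phi> (g + X s)" for j s
      have "(1/t^n) *\<^sub>R (F 0 t - taylor_poly (\<lambda>j. F j 0) n t) \<in> D"
      proof (rule taylor_remainder_in_convex[OF _ _ D(1,2,3) t])
        show "has_curve_deriv (F j) (F (Suc j) s) s" if "j < n" "\<bar>s\<bar> < \<delta>" for j s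
          unfolding F_def
          by (rule has_curve_deriv_one_param_subgroup[OF X LUCn_loc_has_ldir_deriv_pow[OF \<phi> that(1) X]])
        show "F n s - F n 0 \<in> D" if "\<bar>s\<bar> < \<delta>" for s
          using \<delta> g that D(3) by (cases "s = 0") (simp_all add: F_def one_param_subgroup_zero[OF X])
      qed
      then show ?thesis
        by (simp add: F_def one_param_subgroup_zero[OF X])
    qed
    then show "\<exists>\<delta>>0. \<forall>g\<in>V. \<forall>t. t \<noteq> 0 \<and> \<bar>t\<bar> < \<delta> \<longrightarrow>
        (1/t^n) *\<^sub>R (\<phi> (g + X t) - taylor_poly (\<lambda>j. ldir_deriv_pow X j \<phi> g) n t) \<in> U"
      using \<open>\<delta> > 0\<close> D(4) by (intro exI[of _ \<delta>]) blast
  qed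
  then show ?thesis
    using that V by blast
qed

lemma first_order_remainder_uniform:
  fixes \<phi> :: "'g::topological_group_add \<Rightarrow> 'y::locally_convex_space"
  assumes "\<phi> \<in> LUCn_loc n" "1 \<le> n" and X: "X \<in> one_param_subgroups"
  obtains V where "open V" "g0 \<in> V"
    "uniform_tendsto_zero_on V (\<lambda>g t. (1/t) *\<^sub>R (\<phi> (g + X t) - \<phi> g - t *\<^sub>R ldir_deriv X \<phi> g))"
proof -
  have "\<phi> \<in> LUCn_loc 1"
    using LUCn_loc_antimono assms(1,2) by blast
  then obtain V where V: "open V" "g0 \<in> V" and "uniform_tendsto_zero_on V
      (\<lambda>g t. (1/t^1) *\<^sub>R (\<phi> (g + X t) - taylor_poly (\<lambda>j. ldir_deriv_pow X j \<phi> g) 1 t))"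
    using taylor_remainder_uniform[OF _ X] by blast
  moreover have "(\<lambda>g t. (1/t^1) *\<^sub>R (\<phi> (g + X t) - taylor_poly (\<lambda>j. ldir_deriv_pow X j \<phi> g) 1 t))
      = (\<lambda>g t. (1/t) *\<^sub>R (\<phi> (g + X t) - \<phi> g - t *\<^sub>R ldir_deriv X \<phi> g))"
    by (simp add: taylor_poly_def diff_diff_eq)
  ultimately have "uniform_tendsto_zero_on V
      (\<lambda>g t. (1/t) *\<^sub>R (\<phi> (g + X t) - \<phi> g - t *\<^sub>R ldir_deriv X \<phi> g))"
    by (simp only:)
  then show ?thesis
    by (rule that[OF V])
qed

text \<open>Move along \<open>X\<^sub>1\<close> first and then along \<open>X\<^sub>2\<close>: the error splits into the first-order
  remainder along \<open>X\<^sub>2\<close> at the moving point \<open>g + X\<^sub>1 t\<close>, the increment of \<open>D\<^sub>X\<^sub>2 \<phi>\<close> along \<open>X\<^sub>1\<close>,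
  and the first-order remainder along \<open>X\<^sub>1\<close> at \<open>g\<close>.\<close>
lemma two_step_remainder_uniform:
  fixes \<phi> :: "'g::topological_group_add \<Rightarrow> 'y::locally_convex_space"
  assumes \<phi>: "\<phi> \<in> LUCn_loc n" "1 \<le> n"
    and X1: "X1 \<in> one_param_subgroups" and X2: "X2 \<in> one_param_subgroups"
  obtains V where "open V" "g0 \<in> V" "uniform_tendsto_zero_on V (\<lambda>g t.
    (1/t) *\<^sub>R (\<phi> (g + X1 t + X2 t) - \<phi> g - t *\<^sub>R (ldir_deriv X1 \<phi> g + ldir_deriv X2 \<phi> g)))"
proof -
  define \<rho> where "\<rho> X = (\<lambda>g t. (1/t) *\<^sub>R (\<phi> (g + X t) - \<phi> g - t *\<^sub>R ldir_deriv X \<phi> g))" for X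
  obtain B where B: "open B" "g0 \<in> B" "uniform_tendsto_zero_on B (\<rho> X2)"
    unfolding \<rho>_def by (rule first_order_remainder_uniform[OF \<phi> X2])
  obtain A \<delta> where A: "open A" "g0 \<in> A" "\<delta> > 0"
    and shift: "\<And>g s. g \<in> A \<Longrightarrow> \<bar>s\<bar> < \<delta> \<Longrightarrow> g + X1 s \<in> B"
    by (meson one_param_subgroup_translate_nhds[OF X1 B(1,2)])
  have moving: "uniform_tendsto_zero_on A (\<lambda>g t. \<rho> X2 (g + X1 t) t)"
    by (rule uniform_tendsto_zero_on_compose[where k="\<lambda>g t. g + X1 t", OF B(3) \<open>\<delta> > 0\<close> shift])
  have "ldir_deriv X2 \<phi> \<in> LUC_loc"
    using LUCn_loc_ldir_deriv_pow_LUC_loc[OF \<phi>(1) _ X2, of 1] \<phi>(2) by simp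
  then obtain C where C: "open C" "g0 \<in> C"
    and increment: "uniform_tendsto_zero_on C (\<lambda>g t. ldir_deriv X2 \<phi> (g + X1 t) - ldir_deriv X2 \<phi> g)"
    using X1 by (rule LUC_loc_increment_uniform)
  obtain E where E: "open E" "g0 \<in> E" "uniform_tendsto_zero_on E (\<rho> X1)"
    unfolding \<rho>_def by (rule first_order_remainder_uniform[OF \<phi> X1])
  let ?split = "\<lambda>g t. \<rho> X2 (g + X1 t) t + (ldir_deriv X2 \<phi> (g + X1 t) - ldir_deriv X2 \<phi> g) + \<rho> X1 g t"
  let ?remainder = "\<lambda>g t.
    (1/t) *\<^sub>R (\<phi> (g + X1 t + X2 t) - \<phi> g - t *\<^sub>R (ldir_deriv X1 \<phi> g + ldir_deriv X2 \<phi> g))"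
  have "uniform_tendsto_zero_on (A \<inter> C \<inter> E) ?split"
    by (intro uniform_tendsto_zero_on_add;
        rule uniform_tendsto_zero_on_subset[OF moving] uniform_tendsto_zero_on_subset[OF increment]
          uniform_tendsto_zero_on_subset[OF E(3)]; blast)
  moreover have "?remainder g t = ?split g t" if "t \<noteq> 0" for g t
    using that by (simp add: \<rho>_def scaleR_diff_right scaleR_add_right)
  ultimately have "uniform_tendsto_zero_on (A \<inter> C \<inter> E) ?remainder"
    using uniform_tendsto_zero_on_cong[of "A \<inter> C \<inter> E" ?remainder ?split] by blast
  then show ?thesis
    by (rule that[rotated 2]) (use A(1,2) C E(1,2) in auto)
qed

lemma eq_add_power_scaleR_quotient:
  fixes x a :: "'a::real_vector"
  assumes "t = 0 \<Longrightarrow> x = a"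
  shows "x = a + t ^ n *\<^sub>R ((1/t ^ n) *\<^sub>R (x - a))"
  using assms by (cases "t = 0") auto

theorem proposition2p2:
  fixes \<phi> :: "'g::{topological_group_add, t2_space} \<Rightarrow> 'y::locally_convex_space"
    and n :: nat
  assumes "n \<ge> 1"
    and "\<phi> \<in> LUCn_loc n"
  shows "\<exists>(\<chi>1 :: 'g \<Rightarrow> (real \<Rightarrow> 'g) \<Rightarrow> real \<Rightarrow> 'y)
           (\<chi>2 :: 'g \<Rightarrow> (real \<Rightarrow> 'g) \<Rightarrow> (real \<Rightarrow> 'g) \<Rightarrow> real \<Rightarrow> 'y).
     (\<forall>g X t. X \<in> one_param_subgroups \<longrightarrow>
        \<phi> (g + X t) = (\<Sum>j\<le>n. (t ^ j / fact j) *\<^sub>R ldir_deriv_pow X j \<phi> g) + t ^ n *\<^sub>R \<chi>1 g X t)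
   \<and> (\<forall>g X. X \<in> one_param_subgroups \<longrightarrow> (\<chi>1 g X \<longlongrightarrow> 0) (at 0))
   \<and> (\<forall>g X1 X2 t. X1 \<in> one_param_subgroups \<and> X2 \<in> one_param_subgroups \<longrightarrow>
        \<phi> (g + X1 t + X2 t) = \<phi> g + t *\<^sub>R (ldir_deriv X1 \<phi> g + ldir_deriv X2 \<phi> g)
                               + t *\<^sub>R \<chi>2 g X1 X2 t)
   \<and> (\<forall>g X1 X2. X1 \<in> one_param_subgroups \<and> X2 \<in> one_param_subgroups \<longrightarrow>
        (\<chi>2 g X1 X2 \<longlongrightarrow> 0) (at 0))
   \<and> (\<forall>g0 X X1 X2. X \<in> one_param_subgroups \<and> X1 \<in> one_param_subgroups \<and>
        X2 \<in> one_param_subgroups \<longrightarrow>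
        (\<exists>V0. open V0 \<and> g0 \<in> V0 \<and>
           uniform_tendsto_zero_on V0 (\<lambda>g t. \<chi>1 g X t) \<and>
           uniform_tendsto_zero_on V0 (\<lambda>g t. \<chi>2 g X1 X2 t)))"
proof -
  define \<chi>1 where "\<chi>1 g X t =
    (1/t^n) *\<^sub>R (\<phi> (g + X t) - taylor_poly (\<lambda>j. ldir_deriv_pow X j \<phi> g) n t)" for g X t
  define \<chi>2 where "\<chi>2 g X1 X2 t =
    (1/t) *\<^sub>R (\<phi> (g + X1 t + X2 t) - \<phi> g - t *\<^sub>R (ldir_deriv X1 \<phi> g + ldir_deriv X2 \<phi> g))" for g X1 X2 t
  have uniform: "\<exists>V0. open V0 \<and> g0 \<in> V0 \<and> uniform_tendsto_zero_on V0 (\<lambda>g t. \<chi>1 g X t)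
      \<and> uniform_tendsto_zero_on V0 (\<lambda>g t. \<chi>2 g X1 X2 t)"
    if X: "X \<in> one_param_subgroups" "X1 \<in> one_param_subgroups" "X2 \<in> one_param_subgroups"
    for g0 X X1 X2
  proof -
    obtain V1 where "open V1" "g0 \<in> V1" "uniform_tendsto_zero_on V1 (\<lambda>g t. \<chi>1 g X t)"
      using taylor_remainder_uniform[OF assms(2) X(1)] unfolding \<chi>1_def by blast
    moreover obtain V2 where "open V2" "g0 \<in> V2" "uniform_tendsto_zero_on V2 (\<lambda>g t. \<chi>2 g X1 X2 t)"
      using two_step_remainder_uniform[OF assms(2,1) X(2,3)] unfolding \<chi>2_def by blast
    ultimately show ?thesis
      by (intro exI[of _ "V1 \<inter> V2"]) (auto elim: uniform_tendsto_zero_on_subset)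
  qed
  show ?thesis
  proof (intro exI[of _ \<chi>1] exI[of _ \<chi>2] conjI allI impI)
    show "\<phi> (g + X t) = (\<Sum>j\<le>n. (t ^ j / fact j) *\<^sub>R ldir_deriv_pow X j \<phi> g) + t ^ n *\<^sub>R \<chi>1 g X t"
      if "X \<in> one_param_subgroups" for g X t
      using that unfolding \<chi>1_def taylor_poly_def[symmetric]
      by (intro eq_add_power_scaleR_quotient) (simp add: one_param_subgroup_zero)
    show "\<phi> (g + X1 t + X2 t) = \<phi> g + t *\<^sub>R (ldir_deriv X1 \<phi> g + ldir_deriv X2 \<phi> g) + t *\<^sub>R \<chi>2 g X1 X2 t"
      if "X1 \<in> one_param_subgroups \<and> X2 \<in> one_param_subgroups" for g X1 X2 t
      using that eq_add_power_scaleR_quotient[of t "\<phi> (g + X1 t + X2 t)" _ 1]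
      by (simp add: \<chi>2_def one_param_subgroup_zero diff_diff_eq)
    show "(\<chi>1 g X \<longlongrightarrow> 0) (at 0)" if "X \<in> one_param_subgroups" for g X
      using uniform[OF that that that, of g] by (auto intro: uniform_tendsto_zero_on_imp_tendsto)
    show "(\<chi>2 g X1 X2 \<longlongrightarrow> 0) (at 0)" if "X1 \<in> one_param_subgroups \<and> X2 \<in> one_param_subgroups"
      for g X1 X2
      using that uniform[of X1 X1 X2 g] by (auto intro: uniform_tendsto_zero_on_imp_tendsto)
  qed (use uniform in blast)
qed

end
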